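(* Run the Unbiased Space Saving sketch with $m$ bins on an i.i.d. stream of items drawn from a discrete distribution with probabilities $p_1 \ge p_2 \ge \cdots$. Let $\alpha = \sum_{j > m} p_j$. For any $\alpha' < \alpha$, with probability $1$, $\hat{N}_{min}(t) > \alpha' t / m$ for all sufficiently large $t$.
   Context: Unbiased Space Saving sketch with $m$ bins: maintain $m$ (item, count) pairs, counts initialized to $0$. For each new row with item $x_{new}$: if $x_{new}$ is a label, increment its count by $1$; otherwise choose a pair with the smallest count $\hat{N}_{min}$ (uniformly at random among all pairs sharing the smallest count), increment its count by $1$, and with probability $1/(\hat{N}_{min}+1)$ replace its label by $x_{new}$. $\hat{N}_{min}(t)$ is the smallest count among the $m$ pairs after $t$ rows have been processed. *)

theory Defs
  imports "HOL-Probability.Probability"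
begin

text \<open>State of the Unbiased Space Saving sketch: a list of m (label, count) pairs.
  Labels are optional: initially no bin carries a label.\<close>
type_synonym uss_sketch = "(nat option \<times> nat) list"

definition uss_init :: "nat \<Rightarrow> uss_sketch" where
  "uss_init m = replicate m (None, 0)"

definition uss_nmin :: "uss_sketch \<Rightarrow> nat" where
  "uss_nmin s = Min (snd ` set s)"

text \<open>One update with new item x; u and v are independent uniform [0,1) variables:
  u selects uniformly a pair among those with smallest count, and the label is
  replaced iff v < 1/(Nmin+1), i.e. with probability 1/(Nmin+1).\<close>
definition uss_step :: "uss_sketch \<Rightarrow> nat \<times> real \<times> real \<Rightarrow> uss_sketch" where
  "uss_step s r = (case r of (x, u, v) \<Rightarrow>
     if Some x \<in> fst ` set s
     then map (\<lambda>(l, c). if l = Some x then (l, Suc c) else (l, c)) s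
     else (let n = uss_nmin s;
               mins = filter (\<lambda>i. snd (s ! i) = n) [0..<length s];
               i = mins ! nat \<lfloor>u * real (length mins)\<rfloor>;
               l = fst (s ! i); c = snd (s ! i)
           in s[i := (if v < 1 / real (Suc n) then Some x else l, Suc c)]))"

fun uss_run :: "nat \<Rightarrow> nat \<Rightarrow> (nat \<times> real \<times> real) stream \<Rightarrow> uss_sketch" where
  "uss_run m 0 \<omega> = uss_init m"
| "uss_run m (Suc t) \<omega> = uss_step (uss_run m t \<omega>) (\<omega> !! t)"

definition uss_Nmin :: "nat \<Rightarrow> nat \<Rightarrow> (nat \<times> real \<times> real) stream \<Rightarrow> nat" where
  "uss_Nmin m t \<omega> = uss_nmin (uss_run m t \<omega>)"

definition uss_row :: "nat pmf \<Rightarrow> (nat \<times> real \<times> real) measure" where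
  "uss_row P = measure_pmf P \<Otimes>\<^sub>M
     (uniform_measure lborel {0..<1::real} \<Otimes>\<^sub>M uniform_measure lborel {0..<1::real})"

end

theory Submission imports Defs begin

text \<open>Call a row fresh if its item is not one of the current labels. A fresh row increments a
  bin of minimal count, so while that minimum is below \<open>L\<close> it raises \<open>\<Sum>\<^sub>i min c\<^sub>i L\<close>
  by one; after \<open>K\<close> fresh rows every count is therefore at least \<open>K div m\<close>, i.e.
  \<open>K(t) < m (N\<^sub>m\<^sub>i\<^sub>n(t) + 1)\<close>. The current labels are at most \<open>m\<close> items, whose total
  probability is at most that of the \<open>m\<close> most likely ones, so given the past every row is fresh
  with probability at least \<open>\<alpha>\<close>. A Chernoff bound gives \<open>P(K(t) \<le> c t) \<le> r\<^sup>t\<close> with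
  \<open>r < 1\<close> for each \<open>c < \<alpha>\<close>, and Borel--Cantelli yields \<open>K(t) > c t\<close> eventually, almost
  surely; it remains to take \<open>\<alpha>' < c < \<alpha>\<close>.\<close>

definition uss_fresh :: "uss_sketch \<Rightarrow> nat \<times> real \<times> real \<Rightarrow> bool" where
  "uss_fresh s r \<longleftrightarrow> Some (fst r) \<notin> fst ` set s \<and> fst (snd r) \<in> {0..<1}"
  \<comment> \<open>\<open>0 \<le> u < 1\<close> holds almost surely and guarantees that \<open>u\<close> selects an existing minimal bin.\<close>

text \<open>Recursing on the tail of the stream lets the first row be integrated out on its own.\<close>

fun uss_run_from :: "uss_sketch \<Rightarrow> nat \<Rightarrow> (nat \<times> real \<times> real) stream \<Rightarrow> uss_sketch" where
  "uss_run_from s 0 \<omega> = s"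
| "uss_run_from s (Suc t) \<omega> = uss_run_from (uss_step s (shd \<omega>)) t (stl \<omega>)"

fun uss_fresh_count :: "uss_sketch \<Rightarrow> nat \<Rightarrow> (nat \<times> real \<times> real) stream \<Rightarrow> nat" where
  "uss_fresh_count s 0 \<omega> = 0"
| "uss_fresh_count s (Suc t) \<omega> =
     of_bool (uss_fresh s (shd \<omega>)) + uss_fresh_count (uss_step s (shd \<omega>)) t (stl \<omega>)"

definition capped_total :: "nat \<Rightarrow> uss_sketch \<Rightarrow> nat" where
  "capped_total L s = (\<Sum>i<length s. min (snd (s ! i)) L)"

subsection \<open>The sketch along one sample path\<close>

lemma length_uss_step [simp]: "length (uss_step s r) = length s"
  by (cases r) (auto simp: uss_step_def Let_def)

lemma uss_step_count_mono:
  assumes "i < length s"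
  shows "snd (s ! i) \<le> snd (uss_step s r ! i)"
proof -
  have "snd (s ! i) \<le> snd (s[j := (l, Suc (snd (s ! j)))] ! i)" for j l
    by (cases "i = j"; cases "j < length s") (auto simp: list_update_beyond)
  then show ?thesis
    using assms by (cases r) (auto simp: uss_step_def Let_def split: prod.splits)
qed

lemma uss_step_fresh:
  assumes "s \<noteq> []" "uss_fresh s r"
  obtains i l where "i < length s" "snd (s ! i) = uss_nmin s"
    "uss_step s r = s[i := (l, Suc (snd (s ! i)))]"
proof -
  obtain x u v where r: "r = (x, u, v)" by (cases r)
  have x: "Some x \<notin> fst ` set s" and u: "0 \<le> u" "u < 1"
    using assms(2) by (auto simp: uss_fresh_def r)
  define mins where "mins = filter (\<lambda>i. snd (s ! i) = uss_nmin s) [0..<length s]"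
  define k where "k = nat \<lfloor>u * real (length mins)\<rfloor>"
  have "uss_nmin s \<in> snd ` set s"
    unfolding uss_nmin_def using assms(1) by (intro Min_in) auto
  then obtain j where "j < length s" "snd (s ! j) = uss_nmin s"
    by (auto simp: in_set_conv_nth)
  then have "mins \<noteq> []"
    by (auto simp: mins_def filter_empty_conv)
  then have "k < length mins"
    using u by (simp add: k_def nat_less_iff floor_less_iff mult_less_cancel_right2)
  then have "mins ! k < length s" "snd (s ! (mins ! k)) = uss_nmin s"
    using nth_mem[of k mins] by (auto simp: mins_def)
  moreover have "uss_step s r = s[mins ! k :=
      (if v < 1 / real (Suc (uss_nmin s)) then Some x else fst (s ! (mins ! k)),
       Suc (snd (s ! (mins ! k))))]"
    using x by (simp add: r uss_step_def Let_def mins_def[symmetric] k_def[symmetric])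
  ultimately show ?thesis using that by blast
qed

lemma capped_total_le: "capped_total L s \<le> length s * L"
  using sum_mono[of "{..<length s}" "\<lambda>i. min (snd (s ! i)) L" "\<lambda>_. L"]
  by (simp add: capped_total_def)

lemma capped_total_eq_iff:
  assumes "s \<noteq> []"
  shows "capped_total L s = length s * L \<longleftrightarrow> L \<le> uss_nmin s"
proof
  assume full: "capped_total L s = length s * L"
  have "L \<le> snd (s ! i)" if "i < length s" for i
    using sum_mono_inv[of "\<lambda>i. min (snd (s ! i)) L" "{..<length s}" "\<lambda>_. L" i] full that
    by (simp add: capped_total_def)
  then show "L \<le> uss_nmin s"
    using assms by (auto simp: uss_nmin_def in_set_conv_nth, metis snd_conv)
next
  assume L: "L \<le> uss_nmin s"
  have "min (snd (s ! i)) L = L" if "i < length s" for i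
  proof -
    have "uss_nmin s \<le> snd (s ! i)"
      unfolding uss_nmin_def using that by (intro Min_le) auto
    then show ?thesis using L by simp
  qed
  then show "capped_total L s = length s * L"
    by (simp add: capped_total_def)
qed

lemma capped_total_uss_step_mono: "capped_total L s \<le> capped_total L (uss_step s r)"
  unfolding capped_total_def by (auto intro!: sum_mono min.mono uss_step_count_mono)

lemma capped_total_list_update:
  assumes "i < length s"
  shows "capped_total L (s[i := y]) + min (snd (s ! i)) L = capped_total L s + min (snd y) L"
proof -
  let ?rest = "\<Sum>j\<in>{..<length s} - {i}. min (snd (s ! j)) L"
  have "capped_total L (s[i := y]) = ?rest + min (snd y) L"
    using assms by (simp add: capped_total_def sum.remove[of _ i] nth_list_update)
  moreover have "capped_total L s = ?rest + min (snd (s ! i)) L"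
    using assms by (simp add: capped_total_def sum.remove[of _ i])
  ultimately show ?thesis by simp
qed

lemma capped_total_uss_step_fresh:
  assumes "s \<noteq> []" "uss_fresh s r" "uss_nmin s < L"
  shows "capped_total L s < capped_total L (uss_step s r)"
proof -
  obtain i l where "i < length s" "snd (s ! i) = uss_nmin s"
    "uss_step s r = s[i := (l, Suc (snd (s ! i)))]"
    using uss_step_fresh[OF assms(1,2)] .
  then show ?thesis
    using capped_total_list_update[of i s L "(l, Suc (snd (s ! i)))"] assms(3) by simp
qed

lemma uss_run_from_Suc: "uss_run_from s (Suc t) \<omega> = uss_step (uss_run_from s t \<omega>) (\<omega> !! t)"
  by (induction t arbitrary: s \<omega>) auto

lemma uss_fresh_count_Suc:
  "uss_fresh_count s (Suc t) \<omega> = uss_fresh_count s t \<omega> + of_bool (uss_fresh (uss_run_from s t \<omega>) (\<omega> !! t))"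
  by (induction t arbitrary: s \<omega>) auto

lemma length_uss_run_from [simp]: "length (uss_run_from s t \<omega>) = length s"
  by (induction t arbitrary: s \<omega>) auto

declare uss_run_from.simps(2) [simp del] uss_fresh_count.simps(2) [simp del]

lemma uss_run_eq_run_from_init: "uss_run m t \<omega> = uss_run_from (uss_init m) t \<omega>"
  by (induction t) (auto simp: uss_run_from_Suc)

lemma min_fresh_count_le_capped_total:
  assumes "s \<noteq> []"
  shows "min (uss_fresh_count s t \<omega>) (length s * L) \<le> capped_total L (uss_run_from s t \<omega>)"
proof (induction t)
  case 0
  then show ?case by simp
next
  case (Suc t)
  let ?s = "uss_run_from s t \<omega>" and ?r = "\<omega> !! t"
  have ne: "?s \<noteq> []" using assms by (metis length_uss_run_from length_0_conv)
  have mono: "capped_total L ?s \<le> capped_total L (uss_step ?s ?r)"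
    by (rule capped_total_uss_step_mono)
  consider (grow) "uss_fresh ?s ?r" "uss_nmin ?s < L" | (full) "L \<le> uss_nmin ?s"
    | (stale) "\<not> uss_fresh ?s ?r"
    by linarith
  then show ?case
  proof cases
    case grow
    then show ?thesis
      using Suc.IH capped_total_uss_step_fresh[OF ne grow] by (simp add: uss_run_from_Suc uss_fresh_count_Suc)
  next
    case full
    then show ?thesis
      using mono capped_total_eq_iff[OF ne, of L] by (simp add: uss_run_from_Suc uss_fresh_count_Suc)
  next
    case stale
    then show ?thesis
      using Suc.IH mono by (simp add: uss_run_from_Suc uss_fresh_count_Suc)
  qed
qed

lemma fresh_count_lt_uss_Nmin:
  assumes "m > 0"
  shows "uss_fresh_count (uss_init m) t \<omega> < m * Suc (uss_Nmin m t \<omega>)"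
proof -
  define K where "K = uss_fresh_count (uss_init m) t \<omega>"
  define s where "s = uss_run_from (uss_init m) t \<omega>"
  have len: "length s = m"
    by (simp add: s_def uss_init_def)
  with assms have ne: "s \<noteq> []" by auto
  have "m * (K div m) \<le> capped_total (K div m) s"
    using min_fresh_count_le_capped_total[of "uss_init m" t \<omega> "K div m"] assms
    by (simp add: K_def s_def uss_init_def min_absorb2)
  then have "capped_total (K div m) s = length s * (K div m)"
    using capped_total_le[of "K div m" s] len by simp
  then have "K div m < Suc (uss_Nmin m t \<omega>)"
    using capped_total_eq_iff[OF ne] by (simp add: s_def uss_Nmin_def uss_run_eq_run_from_init)
  then show ?thesis
    using assms by (simp add: K_def div_less_iff_less_mult mult.commute)
qed

lemma space_uss_row [simp]: "space (uss_row P) = UNIV"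
  by (simp add: uss_row_def space_pair_measure)

lemma prob_space_uss_row: "prob_space (uss_row P)"
  unfolding uss_row_def
  by (intro prob_space_pair prob_space_uniform_measure prob_space_measure_pmf) auto

lemma measurable_uss_step [measurable]: "uss_step s \<in> uss_row P \<rightarrow>\<^sub>M count_space UNIV"
  unfolding uss_step_def uss_row_def split_beta Let_def by measurable

lemma measurable_uss_fresh [measurable]: "uss_fresh s \<in> uss_row P \<rightarrow>\<^sub>M count_space UNIV"
  unfolding uss_fresh_def uss_row_def by measurable

lemma measurable_uss_fresh_count [measurable]:
  "(\<lambda>\<omega>. uss_fresh_count s t \<omega>) \<in> stream_space (uss_row P) \<rightarrow>\<^sub>M count_space UNIV"
proof (induction t arbitrary: s)
  case 0
  then show ?case by simp
next
  case (Suc t)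
  have "(\<lambda>\<omega>. uss_fresh_count (uss_step s (shd \<omega>)) t (stl \<omega>))
      \<in> stream_space (uss_row P) \<rightarrow>\<^sub>M count_space UNIV"
    by (rule measurable_compose_countable[where f = "\<lambda>s' \<omega>. uss_fresh_count s' t (stl \<omega>)"])
      (use Suc in measurable)
  then show ?case
    unfolding uss_fresh_count.simps(2) by measurable
qed

subsection \<open>Each row is fresh with probability at least \<open>\<alpha>\<close>\<close>

lemma measure_pmf_le_lessThan:
  fixes P :: "nat pmf"
  assumes "antimono (pmf P)" "finite A" "card A \<le> m"
  shows "measure_pmf.prob P A \<le> measure_pmf.prob P {..<m}"
proof -
  let ?B = "{..<m}"
  have "card (A - ?B) \<le> card (?B - A)"
    using card_Int_Diff[OF assms(2), of ?B] card_Int_Diff[of ?B A] assms(3)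
    by (simp add: Int_commute)
  have "sum (pmf P) (A - ?B) \<le> card (A - ?B) * pmf P m"
    using assms(1) by (intro sum_bounded_above) (auto simp: antimono_def)
  also have "\<dots> \<le> card (?B - A) * pmf P m"
    using \<open>card (A - ?B) \<le> card (?B - A)\<close> by (intro mult_right_mono) auto
  also have "\<dots> \<le> sum (pmf P) (?B - A)"
    using assms(1) by (intro sum_bounded_below) (auto simp: antimono_def)
  finally have "sum (pmf P) A \<le> sum (pmf P) ?B"
    using sum.Int_Diff[OF assms(2), where g = "pmf P" and B = ?B]
      sum.Int_Diff[of ?B, where g = "pmf P" and B = A]
    by (simp add: Int_commute)
  then show ?thesis
    using assms(2) by (simp add: measure_measure_pmf_finite)
qed

lemma prob_uss_fresh_ge:
  assumes "antimono (pmf P)" "length s \<le> m"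
  shows "measure_pmf.prob P {m..} \<le> measure (uss_row P) {r \<in> space (uss_row P). uss_fresh s r}"
proof -
  define A where "A = Some -` fst ` set s"
  let ?U = "uniform_measure lborel {0..<1::real}"
  interpret U: prob_space ?U
    by (rule prob_space_uniform_measure) auto
  interpret UU: prob_space "?U \<Otimes>\<^sub>M ?U"
    by (intro prob_space_pair) unfold_locales
  have "{r \<in> space (uss_row P). uss_fresh s r} = (- A) \<times> ({0..<1} \<times> UNIV)"
    by (force simp: uss_fresh_def A_def)
  moreover have "emeasure (?U \<Otimes>\<^sub>M ?U) ({0..<1} \<times> UNIV) = 1"
    by (simp add: U.emeasure_pair_measure_Times emeasure_uniform_measure_1 U.emeasure_space_1)
  ultimately have fresh: "measure (uss_row P) {r \<in> space (uss_row P). uss_fresh s r} = 1 - measure P A"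
    using measure_pmf.prob_compl[of A P]
    by (simp add: uss_row_def UU.emeasure_pair_measure_Times measure_def Compl_eq_Diff_UNIV)
  have "card A \<le> card (fst ` set s)"
    unfolding A_def by (intro card_inj_on_le[of Some]) auto
  also have "\<dots> \<le> length s"
    using card_image_le card_length le_trans by blast
  finally have "measure_pmf.prob P A \<le> measure_pmf.prob P {..<m}"
    using assms by (intro measure_pmf_le_lessThan) (auto simp: A_def intro!: finite_vimageI)
  also have "\<dots> = 1 - measure_pmf.prob P {m..}"
    using measure_pmf.prob_compl[of "{m..}" P] by (simp add: Compl_eq_Diff_UNIV[symmetric])
  finally show ?thesis
    using fresh by simp
qed

subsection \<open>A Chernoff bound for the number of fresh rows\<close>

lemma one_minus_exp_factor_nonneg:
  fixes a l :: real
  assumes "0 \<le> l" "0 \<le> a" "a \<le> 1"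
  shows "0 \<le> 1 - (1 - exp (- l)) * a"
proof -
  have "(1 - exp (- l)) * a \<le> 1 * 1"
    using assms by (intro mult_mono) auto
  then show ?thesis by simp
qed

lemma nn_integral_exp_uss_fresh_le:
  fixes l :: real
  assumes "antimono (pmf P)" "length s \<le> m" "0 \<le> l"
  shows "(\<integral>\<^sup>+ r. ennreal (exp (- l * of_bool (uss_fresh s r))) \<partial>uss_row P)
    \<le> ennreal (1 - (1 - exp (- l)) * measure_pmf.prob P {m..})"
proof -
  interpret prob_space "uss_row P" by (rule prob_space_uss_row)
  define A where "A = {r \<in> space (uss_row P). uss_fresh s r}"
  have A [measurable]: "A \<in> sets (uss_row P)"
    unfolding A_def by measurable
  define p where "p = measure (uss_row P) A"
  have "(\<integral>\<^sup>+ r. ennreal (exp (- l * of_bool (uss_fresh s r))) \<partial>uss_row P)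
      = (\<integral>\<^sup>+ r. ennreal (exp (- l)) * indicator A r + indicator (space (uss_row P) - A) r \<partial>uss_row P)"
    by (intro nn_integral_cong) (auto simp: A_def split: split_indicator)
  also have "\<dots> = ennreal (exp (- l)) * emeasure (uss_row P) A + emeasure (uss_row P) (space (uss_row P) - A)"
    using sets.compl_sets[OF A] by (subst nn_integral_add) (auto simp: nn_integral_cmult_indicator)
  also have "\<dots> = ennreal (exp (- l) * p + (1 - p))"
    using prob_compl[OF A] by (simp add: emeasure_eq_measure p_def ennreal_mult' ennreal_plus[symmetric])
  also have "\<dots> \<le> ennreal (1 - (1 - exp (- l)) * measure_pmf.prob P {m..})"
  proof (rule ennreal_leI)
    have "(1 - exp (- l)) * measure_pmf.prob P {m..} \<le> (1 - exp (- l)) * p"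
      using prob_uss_fresh_ge[OF assms(1,2)] assms(3) by (intro mult_left_mono) (auto simp: p_def A_def)
    then show "exp (- l) * p + (1 - p) \<le> 1 - (1 - exp (- l)) * measure_pmf.prob P {m..}"
      by (simp add: algebra_simps)
  qed
  finally show ?thesis .
qed

lemma nn_integral_exp_fresh_count_le:
  fixes l :: real
  assumes "antimono (pmf P)" "length s \<le> m" "0 \<le> l"
  shows "(\<integral>\<^sup>+ \<omega>. ennreal (exp (- l * uss_fresh_count s t \<omega>)) \<partial>stream_space (uss_row P))
    \<le> ennreal ((1 - (1 - exp (- l)) * measure_pmf.prob P {m..}) ^ t)"
proof -
  interpret R: prob_space "uss_row P" by (rule prob_space_uss_row)
  interpret S: prob_space "stream_space (uss_row P)" by (rule R.prob_space_stream_space)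
  define q where "q = 1 - (1 - exp (- l)) * measure_pmf.prob P {m..}"
  have "0 \<le> q"
    unfolding q_def using assms(3) by (intro one_minus_exp_factor_nonneg) auto
  show ?thesis
    using assms(2) unfolding q_def[symmetric]
  proof (induction t arbitrary: s)
    case 0
    then show ?case by (simp add: S.emeasure_space_1)
  next
    case (Suc t)
    let ?I = "\<lambda>r. ennreal (exp (- l * of_bool (uss_fresh s r)))"
    let ?rest = "\<lambda>r. \<integral>\<^sup>+ X. ennreal (exp (- l * uss_fresh_count (uss_step s r) t X)) \<partial>stream_space (uss_row P)"
    have "(\<integral>\<^sup>+ \<omega>. ennreal (exp (- l * uss_fresh_count s (Suc t) \<omega>)) \<partial>stream_space (uss_row P))
        = (\<integral>\<^sup>+ r. \<integral>\<^sup>+ X. ennreal (exp (- l * uss_fresh_count s (Suc t) (r ## X))) \<partial>stream_space (uss_row P) \<partial>uss_row P)"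
      by (rule R.nn_integral_stream_space) measurable
    also have "\<dots> = (\<integral>\<^sup>+ r. ?I r * ?rest r \<partial>uss_row P)"
      by (intro nn_integral_cong, subst nn_integral_cmult[symmetric])
        (auto intro!: nn_integral_cong simp: uss_fresh_count.simps(2) ennreal_mult'[symmetric]
          exp_add[symmetric] algebra_simps)
    also have "\<dots> \<le> (\<integral>\<^sup>+ r. ?I r * ennreal (q ^ t) \<partial>uss_row P)"
      using Suc by (intro nn_integral_mono mult_left_mono) auto
    also have "\<dots> = (\<integral>\<^sup>+ r. ?I r \<partial>uss_row P) * ennreal (q ^ t)"
      by (rule nn_integral_multc) measurable
    also have "\<dots> \<le> ennreal q * ennreal (q ^ t)"
      using nn_integral_exp_uss_fresh_le[OF assms(1) Suc.prems assms(3)]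
      by (intro mult_right_mono) (auto simp: q_def)
    also have "\<dots> = ennreal (q ^ Suc t)"
      using \<open>0 \<le> q\<close> by (simp add: ennreal_mult'[symmetric])
    finally show ?case .
  qed
qed

lemma prob_fresh_count_le:
  fixes c l :: real
  assumes "antimono (pmf P)" "0 \<le> l"
  shows "measure (stream_space (uss_row P))
      {\<omega> \<in> space (stream_space (uss_row P)). uss_fresh_count (uss_init m) t \<omega> \<le> c * t}
    \<le> (exp (l * c) * (1 - (1 - exp (- l)) * measure_pmf.prob P {m..})) ^ t"
proof -
  define S where "S = stream_space (uss_row P)"
  define E where "E = {\<omega> \<in> space S. uss_fresh_count (uss_init m) t \<omega> \<le> c * t}"
  define q where "q = 1 - (1 - exp (- l)) * measure_pmf.prob P {m..}"
  interpret R: prob_space "uss_row P" by (rule prob_space_uss_row)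
  interpret S: prob_space S unfolding S_def by (rule R.prob_space_stream_space)
  have E [measurable]: "E \<in> sets S"
    unfolding E_def S_def by measurable
  have "ennreal (exp (- l * (c * t)) * measure S E) = (\<integral>\<^sup>+ \<omega>. ennreal (exp (- l * (c * t))) * indicator E \<omega> \<partial>S)"
    by (simp add: nn_integral_cmult_indicator S.emeasure_eq_measure ennreal_mult')
  also have "\<dots> \<le> (\<integral>\<^sup>+ \<omega>. ennreal (exp (- l * uss_fresh_count (uss_init m) t \<omega>)) \<partial>S)"
  proof (intro nn_integral_mono)
    fix \<omega>
    have "\<omega> \<in> E \<Longrightarrow> - l * (c * t) \<le> - l * uss_fresh_count (uss_init m) t \<omega>"
      using assms(2) by (intro mult_left_mono_neg) (auto simp: E_def)
    then show "ennreal (exp (- l * (c * t))) * indicator E \<omega>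
        \<le> ennreal (exp (- l * uss_fresh_count (uss_init m) t \<omega>))"
      by (auto split: split_indicator intro!: ennreal_leI)
  qed
  also have "\<dots> \<le> ennreal (q ^ t)"
    unfolding S_def q_def by (rule nn_integral_exp_fresh_count_le[OF assms(1)]) (simp_all add: uss_init_def assms(2))
  finally have "exp (- l * (c * t)) * measure S E \<le> q ^ t"
    using one_minus_exp_factor_nonneg[OF assms(2), of "measure_pmf.prob P {m..}"]
    by (subst (asm) ennreal_le_iff) (auto simp: q_def)
  then have "measure S E \<le> q ^ t * exp (l * c * t)"
    by (simp add: exp_minus field_simps)
  also have "\<dots> = (exp (l * c) * q) ^ t"
    by (simp add: power_mult_distrib exp_of_nat_mult[symmetric] mult.commute)
  finally show ?thesis
    unfolding S_def E_def q_def .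
qed

lemma exists_exp_factor_less_1:
  fixes a c :: real
  assumes "c < a"
  shows "\<exists>l>0. exp (l * c) * (1 - (1 - exp (- l)) * a) < 1"
proof -
  define g where "g l = exp (l * c) * (1 - (1 - exp (- l)) * a)" for l
  have "(g has_real_derivative c - a) (at 0)"
    unfolding g_def by (auto intro!: derivative_eq_intros)
  then obtain d where "d > 0" and dec: "\<And>h. h > 0 \<Longrightarrow> h < d \<Longrightarrow> g (0 + h) < g 0"
    using DERIV_neg_dec_right[of g "c - a" 0] assms by auto
  have "g (d / 2) < g 0"
    using dec[of "d / 2"] \<open>d > 0\<close> by simp
  moreover have "g 0 = 1"
    by (simp add: g_def)
  ultimately show ?thesis
    using \<open>d > 0\<close> by (intro exI[of _ "d / 2"]) (simp add: g_def)
qed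

lemma AE_eventually_fresh_count_gt:
  fixes c :: real
  assumes "antimono (pmf P)" "c < measure_pmf.prob P {m..}"
  shows "AE \<omega> in stream_space (uss_row P). eventually (\<lambda>t. c * t < uss_fresh_count (uss_init m) t \<omega>) sequentially"
proof -
  define S where "S = stream_space (uss_row P)"
  interpret R: prob_space "uss_row P" by (rule prob_space_uss_row)
  interpret S: prob_space S unfolding S_def by (rule R.prob_space_stream_space)
  obtain l :: real where "l > 0" and r: "exp (l * c) * (1 - (1 - exp (- l)) * measure_pmf.prob P {m..}) < 1"
    using exists_exp_factor_less_1[OF assms(2)] by blast
  define r where "r = exp (l * c) * (1 - (1 - exp (- l)) * measure_pmf.prob P {m..})"
  have "0 \<le> r"
    unfolding r_def using \<open>l > 0\<close> one_minus_exp_factor_nonneg[of l "measure_pmf.prob P {m..}"] by simp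
  define E where "E t = {\<omega> \<in> space S. uss_fresh_count (uss_init m) t \<omega> \<le> c * t}" for t
  have [measurable]: "E t \<in> sets S" for t
    unfolding E_def S_def by measurable
  have "measure S (E t) \<le> r ^ t" for t
    unfolding E_def S_def r_def using \<open>l > 0\<close> by (intro prob_fresh_count_le[OF assms(1)]) simp
  then have "summable (\<lambda>t. measure S (E t))"
    using \<open>0 \<le> r\<close> r unfolding r_def[symmetric]
    by (intro summable_comparison_test'[OF summable_geometric[of r]]) auto
  then have "AE \<omega> in S. eventually (\<lambda>t. \<omega> \<in> space S - E t) sequentially"
    by (intro borel_cantelli_AE1) (auto simp: S.emeasure_eq_measure)
  then show ?thesis
    unfolding S_def[symmetric]
    by (rule eventually_mono) (auto elim: eventually_mono simp: E_def not_le)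
qed

theorem lemma1:
  fixes P :: "nat pmf" and m :: nat and \<alpha>' :: real
  assumes "m > 0"
    and "antimono (pmf P)"
    and "\<alpha>' < measure_pmf.prob P {m..}"
  shows "AE \<omega> in stream_space (uss_row P).
           eventually (\<lambda>t. real (uss_Nmin m t \<omega>) > \<alpha>' * real t / real m) sequentially"
proof -
  define c where "c = (\<alpha>' + measure_pmf.prob P {m..}) / 2"
  have "\<alpha>' < c" "c < measure_pmf.prob P {m..}"
    using assms(3) by (auto simp: c_def)
  have large: "eventually (\<lambda>t. real m \<le> (c - \<alpha>') * t) sequentially"
    using \<open>\<alpha>' < c\<close> filterlim_real_sequentially
    by (auto simp: filterlim_at_top mult.commute pos_divide_le_eq[symmetric] intro: eventually_mono)
  have "AE \<omega> in stream_space (uss_row P). eventually (\<lambda>t. c * t < uss_fresh_count (uss_init m) t \<omega>) sequentially"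
    using AE_eventually_fresh_count_gt[OF assms(2) \<open>c < _\<close>] .
  then show ?thesis
  proof (rule eventually_mono)
    fix \<omega>
    assume "eventually (\<lambda>t. c * t < uss_fresh_count (uss_init m) t \<omega>) sequentially"
    with large show "eventually (\<lambda>t. real (uss_Nmin m t \<omega>) > \<alpha>' * real t / real m) sequentially"
    proof (rule eventually_elim2)
      fix t
      assume "real m \<le> (c - \<alpha>') * t" "c * t < uss_fresh_count (uss_init m) t \<omega>"
      moreover have "real (uss_fresh_count (uss_init m) t \<omega>) < real (m * Suc (uss_Nmin m t \<omega>))"
        using fresh_count_lt_uss_Nmin[OF assms(1)] by (simp only: of_nat_less_iff)
      ultimately have "\<alpha>' * t < m * uss_Nmin m t \<omega>"
        by (simp add: algebra_simps)
      then show "real (uss_Nmin m t \<omega>) > \<alpha>' * real t / real m"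
        using assms(1) by (simp add: pos_divide_less_eq mult.commute)
    qed
  qed
qed

end
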